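(* Assume the setting below and suppose $\tau\le0$ and $|x_0^{(1)}|>a$. Let $r_0=\lceil\log_2(|x_0^{(1)}|/a)\rceil$. Then (with probability one) there is $j\le r_0$ such that $|x_j^{(1)}|<a$, and moreover $|x_k^{(1)}|<a$ for all $k\ge j$.
   Context: Let $n\ge2$, $a\ge\sqrt{n-1}$, $f(x)=a|x^{(1)}|+\sum_{i=2}^n x^{(i)}$ on $\mathbb{R}^n$ ($x^{(i)}$ the $i$-th coordinate), $0<c_1<c_2<1$, and $\tau=c_1+\frac{(n-1)(c_1-1)}{a^2}$. The initial point $x_0$ is drawn from the normal distribution on $\mathbb{R}^n$ (independently of $a$), and $x_{k+1}=x_k+t_kd_k$, $d_k=-\nabla f(x_k)$, where $t_k$ is returned by the following Armijo–Wolfe bracketing line search: set $\alpha=0$, $\beta=+\infty$, $t=1$; repeat: if $A(t)$ fails set $\beta\leftarrow t$; else if $W(t)$ fails set $\alpha\leftarrow t$; else stop and return $t$; then if $\beta<+\infty$ set $t\leftarrow(\alpha+\beta)/2$, otherwise $t\leftarrow2\alpha$. Here $A(t)$: $f(x_k+td_k)\le f(x_k)+c_1t\nabla f(x_k)^Td_k$, and $W(t)$: $f$ is differentiable at $x_k+td_k$ and $\nabla f(x_k+td_k)^Td_k\ge c_2\nabla f(x_k)^Td_k$. All statements are understood to hold with probability one. *)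

theory Defs
  imports "HOL-Probability.Probability"
begin

text \<open>Objective f(x) = a |x_p| + sum over the other coordinates, on real^'n.
  The distinguished coordinate p plays the role of the first coordinate.\<close>
definition fobj :: "real \<Rightarrow> 'n::finite \<Rightarrow> real^'n \<Rightarrow> real" where
  "fobj a p x = a * \<bar>x $ p\<bar> + (\<Sum>i\<in>UNIV - {p}. x $ i)"

definition grad :: "(real^'n::finite \<Rightarrow> real) \<Rightarrow> real^'n \<Rightarrow> real^'n" where
  "grad f x = (SOME g. (f has_derivative (\<lambda>h. g \<bullet> h)) (at x))"

definition armijo :: "(real^'n::finite \<Rightarrow> real) \<Rightarrow> real \<Rightarrow> real^'n \<Rightarrow> real^'n \<Rightarrow> real \<Rightarrow> bool" where
  "armijo f c1 x d t \<longleftrightarrow> f (x + t *\<^sub>R d) \<le> f x + c1 * t * (grad f x \<bullet> d)"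

definition wolfe :: "(real^'n::finite \<Rightarrow> real) \<Rightarrow> real \<Rightarrow> real^'n \<Rightarrow> real^'n \<Rightarrow> real \<Rightarrow> bool" where
  "wolfe f c2 x d t \<longleftrightarrow> f differentiable (at (x + t *\<^sub>R d)) \<and>
     grad f (x + t *\<^sub>R d) \<bullet> d \<ge> c2 * (grad f x \<bullet> d)"

text \<open>State (alpha, beta, t) of the bracketing line search after i iterations;
  beta = None encodes beta = +infinity. Initially alpha = 0, beta = +inf, t = 1.\<close>
primrec ls_state :: "(real^'n::finite \<Rightarrow> real) \<Rightarrow> real \<Rightarrow> real \<Rightarrow> real^'n \<Rightarrow> real^'n \<Rightarrow> nat
    \<Rightarrow> real \<times> real option \<times> real" where
  "ls_state f c1 c2 x d 0 = (0, None, 1)"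
| "ls_state f c1 c2 x d (Suc i) =
     (case ls_state f c1 c2 x d i of (\<alpha>, \<beta>, t) \<Rightarrow>
        let (\<alpha>', \<beta>') = (if \<not> armijo f c1 x d t then (\<alpha>, Some t)
                         else if \<not> wolfe f c2 x d t then (t, \<beta>)
                         else (\<alpha>, \<beta>))
        in (\<alpha>', \<beta>', (case \<beta>' of Some b \<Rightarrow> (\<alpha>' + b) / 2 | None \<Rightarrow> 2 * \<alpha>')))"

definition ls_trial :: "(real^'n::finite \<Rightarrow> real) \<Rightarrow> real \<Rightarrow> real \<Rightarrow> real^'n \<Rightarrow> real^'n \<Rightarrow> nat \<Rightarrow> real" where
  "ls_trial f c1 c2 x d i = snd (snd (ls_state f c1 c2 x d i))"

definition ls_returns :: "(real^'n::finite \<Rightarrow> real) \<Rightarrow> real \<Rightarrow> real \<Rightarrow> real^'n \<Rightarrow> real^'n \<Rightarrow> real \<Rightarrow> bool" where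
  "ls_returns f c1 c2 x d t \<longleftrightarrow>
     (\<exists>i. armijo f c1 x d (ls_trial f c1 c2 x d i) \<and> wolfe f c2 x d (ls_trial f c1 c2 x d i) \<and>
          (\<forall>j<i. \<not> (armijo f c1 x d (ls_trial f c1 c2 x d j) \<and> wolfe f c2 x d (ls_trial f c1 c2 x d j))) \<and>
          t = ls_trial f c1 c2 x d i)"

definition gd_seq :: "(real^'n::finite \<Rightarrow> real) \<Rightarrow> real \<Rightarrow> real \<Rightarrow> (nat \<Rightarrow> real^'n) \<Rightarrow> bool" where
  "gd_seq f c1 c2 xs \<longleftrightarrow>
     (\<forall>k. f differentiable (at (xs k)) \<and>
          (\<exists>t. ls_returns f c1 c2 (xs k) (- grad f (xs k)) t \<and>
               xs (Suc k) = xs k + t *\<^sub>R (- grad f (xs k))))"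

definition std_gauss :: "(real^'n::finite) measure" where
  "std_gauss = density lborel (\<lambda>x. ennreal (\<Prod>i\<in>UNIV. std_normal_density (x $ i)))"

end

theory Submission
  imports Defs
begin

text \<open>Write \<open>v = \<bar>x $ p\<bar> / a\<close> for the iterate \<open>x\<close>. Along the steepest descent ray the
  Armijo condition holds exactly for \<open>t \<le> 2 a \<bar>x $ p\<bar> / D\<close>, where
  \<open>D = a\<^sup>2 (1 + c1) + (n - 1) (c1 - 1)\<close>, and the Wolfe condition exactly for \<open>t > v\<close>: at
  \<open>t = v\<close> the ray crosses the kink \<open>x $ p = 0\<close>, where \<open>f\<close> is not differentiable. Since
  \<open>\<tau> \<le> 0\<close> means \<open>D \<le> a\<^sup>2\<close>, the Armijo bound is at least \<open>2 v\<close>. Hence for \<open>v \<ge> 1\<close> the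
  doubling phase of the search returns \<open>t = 2^K\<close> with \<open>2^(K-1) \<le> v < 2^K\<close>, and the new
  ratio \<open>2^K - v\<close> is at most \<open>2^(K-1)\<close>; for \<open>v < 1\<close> the search returns some \<open>t \<in> (v, 1]\<close>,
  and the new ratio \<open>t - v\<close> lies in \<open>(0, 1)\<close>. If \<open>v\<close> is not an integer then neither is any
  later ratio, so these bounds are strict and \<open>v\<^sub>k < 2^(m-k)\<close> for \<open>m = \<lceil>log\<^sub>2 v\<^sub>0\<rceil>\<close>.
  Integrality of \<open>v\<^sub>0\<close> confines \<open>x\<^sub>0\<close> to countably many hyperplanes, a Gaussian null set.\<close>

definition fobj_grad :: "real \<Rightarrow> 'n::finite \<Rightarrow> real^'n \<Rightarrow> real^'n" where
  "fobj_grad a p x = (\<chi> i. if i = p then a * sgn (x $ p) else 1)"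

lemma inner_fobj_grad:
  "fobj_grad a p x \<bullet> y = a * sgn (x $ p) * y $ p + (\<Sum>i\<in>UNIV - {p}. y $ i)"
  unfolding fobj_grad_def inner_vec_def by (simp add: sum.remove[of UNIV p])

lemma fobj_has_derivative:
  fixes x :: "real^'n::finite"
  assumes "x $ p \<noteq> 0"
  shows "(fobj a p has_derivative (\<lambda>h. fobj_grad a p x \<bullet> h)) (at x)"
proof -
  define S where "S = {y::real^'n. sgn (x $ p) * y $ p > 0}"
  have "((\<lambda>y. fobj_grad a p x \<bullet> y) has_derivative (\<lambda>h. fobj_grad a p x \<bullet> h)) (at x)"
    by (rule bounded_linear_imp_has_derivative) (rule bounded_linear_inner_right)
  moreover have "open S"
  proof (cases "x $ p > 0")
    case True
    then show ?thesis using open_halfspace_component_gt_cart[of 0 p] by (simp add: S_def)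
  next
    case False
    then show ?thesis using assms open_halfspace_component_lt_cart[of p 0] by (simp add: S_def sgn_if)
  qed
  moreover have "x \<in> S" using assms by (simp add: S_def sgn_if)
  moreover have "fobj_grad a p x \<bullet> y = fobj a p y" if "y \<in> S" for y
  proof -
    have "\<bar>y $ p\<bar> = sgn (x $ p) * y $ p" using that assms by (auto simp: S_def sgn_if)
    then show ?thesis by (simp add: inner_fobj_grad fobj_def)
  qed
  ultimately show ?thesis by (rule has_derivative_transform_within_open)
qed

lemma grad_fobj:
  assumes "x $ p \<noteq> 0"
  shows "grad (fobj a p) x = fobj_grad a p x"
proof -
  have deriv: "(fobj a p has_derivative (\<lambda>h. fobj_grad a p x \<bullet> h)) (at x)"
    using fobj_has_derivative[OF assms] .
  then have "(fobj a p has_derivative (\<lambda>h. grad (fobj a p) x \<bullet> h)) (at x)"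
    unfolding grad_def by (rule someI)
  from has_derivative_unique[OF this deriv]
  have "\<And>h. grad (fobj a p) x \<bullet> h = fobj_grad a p x \<bullet> h" by metis
  then show ?thesis by (metis vector_eq_rdot)
qed

lemma fobj_differentiable: "x $ p \<noteq> 0 \<Longrightarrow> fobj a p differentiable (at x)"
  using fobj_has_derivative differentiable_def by blast

lemma abs_not_differentiable_at_0: "\<not> (abs :: real \<Rightarrow> real) differentiable (at 0)"
proof
  assume "(abs :: real \<Rightarrow> real) differentiable (at 0)"
  then obtain D where "(abs has_real_derivative D) (at (0::real))"
    using real_differentiable_def by blast
  then have lim: "((\<lambda>y::real. \<bar>y\<bar> / y) \<longlongrightarrow> D) (at 0)"
    by (simp add: has_field_derivative_iff)
  have "((\<lambda>y::real. \<bar>y\<bar> / y) \<longlongrightarrow> D) (at_right 0)" "((\<lambda>y::real. \<bar>y\<bar> / y) \<longlongrightarrow> D) (at_left 0)"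
    using lim by (auto intro: tendsto_mono[rotated] simp: at_within_le_at)
  moreover have "((\<lambda>y::real. \<bar>y\<bar> / y) \<longlongrightarrow> 1) (at_right 0)"
    by (rule tendsto_eventually) (auto simp: eventually_at_right_field intro: exI[of _ 1])
  moreover have "((\<lambda>y::real. \<bar>y\<bar> / y) \<longlongrightarrow> -1) (at_left 0)"
    by (rule tendsto_eventually) (auto simp: eventually_at_left_field intro: exI[of _ "-1"])
  ultimately have "D = 1" "D = -1"
    using tendsto_unique trivial_limit_at_right_real trivial_limit_at_left_real by blast+
  then show False by simp
qed

lemma fobj_not_differentiable:
  fixes x :: "real^'n::finite"
  assumes "x $ p = 0" "a \<noteq> 0"
  shows "\<not> fobj a p differentiable (at x)"
proof
  assume "fobj a p differentiable (at x)"
  define C where "C = (\<Sum>i\<in>UNIV - {p}. x $ i)"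
  have "(fobj a p \<circ> (\<lambda>s::real. x + s *\<^sub>R axis p 1)) differentiable (at 0)"
    using \<open>fobj a p differentiable (at x)\<close>
    by (intro differentiable_chain_at derivative_intros) simp
  moreover have "fobj a p \<circ> (\<lambda>s::real. x + s *\<^sub>R axis p 1) = (\<lambda>s. a * \<bar>s\<bar> + C)"
    using assms by (auto simp: fobj_def axis_def C_def intro!: sum.cong)
  ultimately have "(\<lambda>s. a * \<bar>s\<bar> + C) differentiable (at (0::real))" by simp
  from differentiable_diff[OF this differentiable_const[of C]]
  have "(\<lambda>s. a * \<bar>s\<bar>) differentiable (at (0::real))" by simp
  then have "(\<lambda>s. \<bar>s\<bar>) differentiable (at (0::real))"
    using assms(2) by (simp only: differentiable_cmult_left_iff) simp
  moreover have "(\<lambda>s::real. \<bar>s\<bar>) = abs" by (rule ext) simp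
  ultimately show False using abs_not_differentiable_at_0 by simp
qed

lemma real_card_UNIV_Diff_singleton: "real (card (UNIV - {p::'n::finite})) = real CARD('n) - 1"
  by (simp add: card_Diff_singleton of_nat_diff card_ge_0_finite Suc_leI)

lemma fobj_grad_inner:
  "fobj_grad a p y \<bullet> fobj_grad a p x = a\<^sup>2 * (sgn (y $ p) * sgn (x $ p)) + (real CARD('n) - 1)"
  for x y :: "real^'n::finite"
  by (simp add: inner_fobj_grad real_card_UNIV_Diff_singleton power2_eq_square)
     (simp add: fobj_grad_def)

lemma descent_line_component:
  "(x + t *\<^sub>R (- fobj_grad a p x)) $ p = sgn (x $ p) * (\<bar>x $ p\<bar> - t * a)"
  by (auto simp: fobj_grad_def sgn_if algebra_simps)

lemma fobj_descent_line:
  fixes x :: "real^'n::finite"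
  assumes "x $ p \<noteq> 0"
  shows "fobj a p (x + t *\<^sub>R (- fobj_grad a p x)) =
    fobj a p x + a * (\<bar>\<bar>x $ p\<bar> - t * a\<bar> - \<bar>x $ p\<bar>) - t * (real CARD('n) - 1)"
proof -
  have "(\<Sum>i\<in>UNIV - {p}. (x + t *\<^sub>R (- fobj_grad a p x)) $ i) = (\<Sum>i\<in>UNIV - {p}. x $ i - t)"
    by (rule sum.cong) (auto simp: fobj_grad_def)
  also have "\<dots> = (\<Sum>i\<in>UNIV - {p}. x $ i) - t * (real CARD('n) - 1)"
    by (simp add: sum_subtractf real_card_UNIV_Diff_singleton)
  finally have sum: "(\<Sum>i\<in>UNIV - {p}. (x + t *\<^sub>R (- fobj_grad a p x)) $ i) =
      (\<Sum>i\<in>UNIV - {p}. x $ i) - t * (real CARD('n) - 1)" .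
  have abs: "\<bar>(x + t *\<^sub>R (- fobj_grad a p x)) $ p\<bar> = \<bar>\<bar>x $ p\<bar> - t * a\<bar>"
    using assms by (simp only: descent_line_component abs_mult) simp
  show ?thesis unfolding fobj_def sum abs by (simp add: algebra_simps)
qed

definition ls_accepts :: "(real^'n::finite \<Rightarrow> real) \<Rightarrow> real \<Rightarrow> real \<Rightarrow> real^'n \<Rightarrow> real^'n \<Rightarrow> nat \<Rightarrow> bool" where
  "ls_accepts f c1 c2 x d i \<longleftrightarrow>
     armijo f c1 x d (ls_trial f c1 c2 x d i) \<and> wolfe f c2 x d (ls_trial f c1 c2 x d i)"

lemma ls_returns_iff_Least:
  "ls_returns f c1 c2 x d t \<longleftrightarrow>
     (\<exists>i. ls_accepts f c1 c2 x d i) \<and> t = ls_trial f c1 c2 x d (LEAST i. ls_accepts f c1 c2 x d i)"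
proof
  assume "ls_returns f c1 c2 x d t"
  then obtain i where i: "ls_accepts f c1 c2 x d i" "\<forall>j<i. \<not> ls_accepts f c1 c2 x d j"
    "t = ls_trial f c1 c2 x d i"
    unfolding ls_returns_def ls_accepts_def by blast
  then have "(LEAST i. ls_accepts f c1 c2 x d i) = i"
    by (intro Least_equality) (auto simp: not_less[symmetric])
  with i show "(\<exists>i. ls_accepts f c1 c2 x d i) \<and>
      t = ls_trial f c1 c2 x d (LEAST i. ls_accepts f c1 c2 x d i)" by auto
next
  assume "(\<exists>i. ls_accepts f c1 c2 x d i) \<and>
      t = ls_trial f c1 c2 x d (LEAST i. ls_accepts f c1 c2 x d i)"
  moreover from this have "ls_accepts f c1 c2 x d (LEAST i. ls_accepts f c1 c2 x d i)"
    by (blast intro: LeastI_ex)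
  ultimately show "ls_returns f c1 c2 x d t"
    unfolding ls_returns_def ls_accepts_def by (blast dest: not_less_Least)
qed

lemma ls_state_Suc:
  assumes "ls_state f c1 c2 x d i = (\<alpha>, \<beta>, t)"
  shows "ls_state f c1 c2 x d (Suc i) =
    (if \<not> armijo f c1 x d t then (\<alpha>, Some t, (\<alpha> + t) / 2)
     else if \<not> wolfe f c2 x d t then (t, \<beta>, case \<beta> of Some b \<Rightarrow> (t + b) / 2 | None \<Rightarrow> 2 * t)
     else (\<alpha>, \<beta>, case \<beta> of Some b \<Rightarrow> (\<alpha> + b) / 2 | None \<Rightarrow> 2 * \<alpha>))"
  using assms by (simp add: Let_def)

locale armijo_wolfe_bracket =
  fixes f :: "real^'n::finite \<Rightarrow> real" and c1 c2 :: real and x d :: "real^'n" and T L :: real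
  assumes armijo_iff: "0 < t \<Longrightarrow> armijo f c1 x d t \<longleftrightarrow> t \<le> T"
    and wolfe_iff: "0 < t \<Longrightarrow> wolfe f c2 x d t \<longleftrightarrow> L < t"
begin

abbreviation "trial \<equiv> ls_trial f c1 c2 x d"
abbreviation "accepts \<equiv> ls_accepts f c1 c2 x d"

lemma ls_returns_doubling:
  assumes "1 \<le> L" "2 * L \<le> T"
  shows "ls_returns f c1 c2 x d t \<longleftrightarrow> t = 2 ^ (LEAST k. L < 2 ^ k)"
proof -
  define K where "K = (LEAST k. L < (2::real) ^ k)"
  have "L < 2 ^ K"
    unfolding K_def by (rule LeastI_ex) (use real_arch_pow[of 2 L] in auto)
  have below: "2 ^ i \<le> L" if "i < K" for i
    using not_less_Least[OF that[unfolded K_def]] by simp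
  have "K \<noteq> 0" using \<open>L < 2 ^ K\<close> assms(1) by (intro notI) simp
  have state: "ls_state f c1 c2 x d i = (if i = 0 then 0 else 2 ^ (i - 1), None, 2 ^ i)"
    if "i \<le> K" for i
    using that
  proof (induction i)
    case (Suc i)
    then have "2 ^ i \<le> L" using below by simp
    then have "armijo f c1 x d (2 ^ i)" "\<not> wolfe f c2 x d (2 ^ i)"
      using armijo_iff[of "2 ^ i"] wolfe_iff[of "2 ^ i"] assms by auto
    with Suc show ?case using ls_state_Suc by simp
  qed simp
  then have trial: "trial i = 2 ^ i" if "i \<le> K" for i
    using that by (simp add: ls_trial_def)
  have "\<not> accepts i" if "i < K" for i
    using that trial[of i] wolfe_iff[of "2 ^ i"] below[OF that] by (simp add: ls_accepts_def)
  moreover have "accepts K"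
  proof -
    have "2 ^ (K - 1) \<le> L" using below[of "K - 1"] \<open>K \<noteq> 0\<close> by simp
    then have "(2::real) ^ K \<le> 2 * L" using \<open>K \<noteq> 0\<close> by (cases K) auto
    then show ?thesis
      using trial[of K] armijo_iff[of "2 ^ K"] wolfe_iff[of "2 ^ K"] \<open>L < 2 ^ K\<close> assms
      by (simp add: ls_accepts_def)
  qed
  ultimately have "(LEAST i. accepts i) = K"
    by (intro Least_equality) (auto simp: not_less[symmetric])
  then show ?thesis
    using \<open>accepts K\<close> trial[of K] by (auto simp: ls_returns_iff_Least K_def)
qed

lemma ls_bisection_bracket:
  assumes "T < 1" "0 < L" "L < T" "\<forall>i<j. \<not> accepts (Suc i)"
  shows "\<exists>\<alpha> b. ls_state f c1 c2 x d (Suc j) = (\<alpha>, Some b, (\<alpha> + b) / 2) \<and>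
           0 \<le> \<alpha> \<and> \<alpha> \<le> L \<and> T < b \<and> b \<le> 1 \<and> b - \<alpha> = 1 / 2 ^ j"
  using assms(4)
proof (induction j)
  case 0
  have "\<not> armijo f c1 x d 1" using armijo_iff[of 1] assms(1) by simp
  then show ?case using assms by simp
next
  case (Suc j)
  then obtain \<alpha> b where state: "ls_state f c1 c2 x d (Suc j) = (\<alpha>, Some b, (\<alpha> + b) / 2)"
    and bracket: "0 \<le> \<alpha>" "\<alpha> \<le> L" "T < b" "b \<le> 1" "b - \<alpha> = 1 / 2 ^ j"
    by auto
  define t where "t = (\<alpha> + b) / 2"
  have "0 < \<alpha> + b" using bracket assms by linarith
  then have "0 < t" by (simp add: t_def)
  have "t \<le> 1" using bracket assms by (simp add: t_def)
  have halves: "t - \<alpha> = 1 / 2 ^ Suc j" "b - t = 1 / 2 ^ Suc j"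
    using bracket(5) by (simp_all add: t_def field_simps)
  have next_state: "ls_state f c1 c2 x d (Suc (Suc j)) =
    (if \<not> armijo f c1 x d t then (\<alpha>, Some t, (\<alpha> + t) / 2)
     else if \<not> wolfe f c2 x d t then (t, Some b, (t + b) / 2)
     else (\<alpha>, Some b, t))"
    using ls_state_Suc[OF state[folded t_def]] by (simp add: t_def)
  have "\<not> (armijo f c1 x d t \<and> wolfe f c2 x d t)"
    using Suc.prems state by (auto simp: ls_accepts_def ls_trial_def t_def)
  then consider "\<not> armijo f c1 x d t" | "armijo f c1 x d t" "\<not> wolfe f c2 x d t" by blast
  then show ?case
  proof cases
    case 1
    then have "T < t" using armijo_iff[OF \<open>0 < t\<close>] by simp
    then show ?thesis using next_state 1 bracket \<open>t \<le> 1\<close> halves by auto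
  next
    case 2
    then have "t \<le> L" using wolfe_iff[OF \<open>0 < t\<close>] by simp
    then show ?thesis using next_state 2 bracket \<open>0 < t\<close> halves by auto
  qed
qed

lemma ls_returns_bisection:
  assumes "0 < L" "L < 1" "L < T"
  shows "\<exists>t. ls_returns f c1 c2 x d t"
    and "ls_returns f c1 c2 x d t \<Longrightarrow> L < t \<and> t \<le> 1"
proof -
  have trial_bounds: "0 < trial i \<and> trial i \<le> 1" if "\<forall>j<i. \<not> accepts j" for i
  proof (cases i)
    case 0
    then show ?thesis by (simp add: ls_trial_def)
  next
    case (Suc j)
    show ?thesis
    proof (cases "T < 1")
      case True
      with ls_bisection_bracket[of j] that Suc assms obtain \<alpha> b
        where "ls_state f c1 c2 x d (Suc j) = (\<alpha>, Some b, (\<alpha> + b) / 2)" "0 \<le> \<alpha>" "\<alpha> \<le> L" "T < b" "b \<le> 1"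
        by auto
      then show ?thesis using Suc assms by (simp add: ls_trial_def)
    next
      case False
      then have "accepts 0"
        using armijo_iff[of 1] wolfe_iff[of 1] assms by (simp add: ls_accepts_def ls_trial_def)
      then show ?thesis using that Suc by blast
    qed
  qed
  have "\<exists>i. accepts i"
  proof (rule ccontr)
    assume none: "\<nexists>i. accepts i"
    then have "trial 0 = 1" "\<not> accepts 0" by (simp_all add: ls_trial_def)
    then have "T < 1"
      using armijo_iff[of 1] wolfe_iff[of 1] assms by (auto simp: ls_accepts_def)
    obtain j where j: "(1 / 2 :: real) ^ j < T - L"
      using real_arch_pow_inv[of "T - L" "1/2"] assms by auto
    obtain \<alpha> b where "\<alpha> \<le> L" "T < b" "b - \<alpha> = 1 / 2 ^ j"
      using ls_bisection_bracket[OF \<open>T < 1\<close> assms(1,3), of j] none by blast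
    then show False using j by (simp add: power_one_over)
  qed
  then show "\<exists>t. ls_returns f c1 c2 x d t" by (simp add: ls_returns_iff_Least)
  assume "ls_returns f c1 c2 x d t"
  then obtain i where "accepts i" "\<forall>j<i. \<not> accepts j" "t = trial i"
    unfolding ls_returns_def ls_accepts_def by blast
  with trial_bounds show "L < t \<and> t \<le> 1"
    using wolfe_iff by (auto simp: ls_accepts_def)
qed

end

lemma dyadic_reflection_less:
  fixes v :: real
  assumes "1 \<le> v" "v \<notin> \<int>" "v < 2 ^ r"
  shows "2 ^ (LEAST k. v < 2 ^ k) - v < 2 ^ (r - 1)"
proof -
  define K where "K = (LEAST k. v < (2::real) ^ k)"
  have "K \<le> r" unfolding K_def using assms(3) by (rule Least_le)
  have "v < 2 ^ K" unfolding K_def by (rule LeastI[of _ r]) (rule assms(3))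
  then have "K \<noteq> 0" using assms(1) by (intro notI) simp
  have "\<not> v < 2 ^ (K - 1)"
    unfolding K_def by (rule not_less_Least) (use \<open>K \<noteq> 0\<close> K_def in simp)
  moreover have "v \<noteq> 2 ^ (K - 1)" using assms(2) by auto
  ultimately have "2 ^ K - v < (2::real) ^ (K - 1)"
    using \<open>K \<noteq> 0\<close> by (cases K) auto
  also have "\<dots> \<le> 2 ^ (r - 1)" using \<open>K \<le> r\<close> by (intro power_increasing) auto
  finally show ?thesis by (simp add: K_def)
qed

lemma null_sets_lborel_component_countable:
  fixes i :: "'n::finite"
  assumes "countable S"
  shows "{x::real^'n. x $ i \<in> S} \<in> null_sets lborel"
proof -
  have "{x::real^'n. x $ i = c} \<in> null_sets lborel" for c
  proof -
    have "negligible {x::real^'n. x \<bullet> axis i 1 = c}"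
      by (rule negligible_standard_hyperplane) simp
    then have "negligible {x::real^'n. x $ i = c}" by (simp add: cart_eq_inner_axis)
    moreover have "{x::real^'n. x $ i = c} \<in> sets lborel" by measurable
    ultimately show ?thesis
      by (simp add: negligible_iff_null_sets null_sets_completion_iff)
  qed
  then have "(\<Union>c\<in>S. {x::real^'n. x $ i = c}) \<in> null_sets lborel"
    using assms by (intro null_sets_UN') auto
  moreover have "{x::real^'n. x $ i \<in> S} = (\<Union>c\<in>S. {x. x $ i = c})" by auto
  ultimately show ?thesis by simp
qed

lemma AE_std_gauss_component_notin:
  fixes i :: "'n::finite"
  assumes "countable S"
  shows "AE x in (std_gauss :: (real^'n) measure). x $ i \<notin> S"
proof -
  have "AE x in lborel. (x::real^'n) $ i \<notin> S"
    using null_sets_lborel_component_countable[OF assms] by (rule AE_I') auto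
  then show ?thesis
    unfolding std_gauss_def by (subst AE_density) (auto elim: eventually_mono)
qed

locale abs_linear_descent =
  fixes a c1 c2 :: real and p :: "'n::finite"
  assumes a_pos: "0 < a" and c1_pos: "0 < c1" and c1_less_c2: "c1 < c2" and c2_less_1: "c2 < 1"
    and card_le: "real CARD('n) - 1 \<le> a\<^sup>2"
    and tau_nonpos: "c1 * a\<^sup>2 + (real CARD('n) - 1) * (c1 - 1) \<le> 0"
begin

definition armijo_denom :: real where
  "armijo_denom = a\<^sup>2 * (1 + c1) + (real CARD('n) - 1) * (c1 - 1)"

lemma armijo_denom_pos: "0 < armijo_denom"
proof -
  have "a\<^sup>2 * (c1 - 1) \<le> (real CARD('n) - 1) * (c1 - 1)"
    using card_le c1_less_c2 c2_less_1 by (intro mult_right_mono_neg) auto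
  then have "2 * c1 * a\<^sup>2 \<le> armijo_denom" by (simp add: armijo_denom_def algebra_simps)
  then show ?thesis using a_pos c1_pos by (smt (verit) mult_pos_pos zero_less_power)
qed

lemma armijo_denom_le: "armijo_denom \<le> a\<^sup>2"
  using tau_nonpos by (simp add: armijo_denom_def algebra_simps)

lemma armijo_fobj_iff:
  fixes x :: "real^'n"
  assumes "x $ p \<noteq> 0" "0 < t"
  shows "armijo (fobj a p) c1 x (- grad (fobj a p) x) t \<longleftrightarrow>
    t \<le> 2 * a * \<bar>x $ p\<bar> / armijo_denom"
proof -
  define u where "u = \<bar>x $ p\<bar>"
  define N where "N = real CARD('n) - 1"
  have slope: "fobj_grad a p x \<bullet> - fobj_grad a p x = - (a\<^sup>2 + N)"
    using assms(1) by (simp add: fobj_grad_inner N_def sgn_mult[symmetric] sgn_if)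
  have "armijo (fobj a p) c1 x (- grad (fobj a p) x) t \<longleftrightarrow>
      a * (\<bar>u - t * a\<bar> - u) - t * N \<le> - c1 * t * (a\<^sup>2 + N)"
    unfolding armijo_def grad_fobj[OF assms(1)] fobj_descent_line[OF assms(1)] slope
    by (simp add: u_def N_def algebra_simps)
  also have "\<dots> \<longleftrightarrow> t * armijo_denom \<le> 2 * a * u"
  proof (cases "t * a \<le> u")
    case True
    have "t * armijo_denom \<le> a * (t * a)"
      using armijo_denom_le assms(2) by (simp add: power2_eq_square)
    also have "\<dots> \<le> 2 * a * u" using True a_pos u_def by (simp add: mult_left_mono)
    finally have "t * armijo_denom \<le> 2 * a * u" .
    moreover have "c1 * (t * (a\<^sup>2 + N)) \<le> t * (a\<^sup>2 + N)"
      using c1_pos c1_less_c2 c2_less_1 assms(2) card_le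
      by (intro mult_left_le_one_le) (auto simp: N_def)
    ultimately show ?thesis
      using True by (simp add: power2_eq_square algebra_simps)
  next
    case False
    then show ?thesis by (simp add: armijo_denom_def N_def power2_eq_square algebra_simps)
  qed
  finally show ?thesis
    using armijo_denom_pos by (simp add: u_def field_simps)
qed

lemma wolfe_fobj_iff:
  fixes x :: "real^'n"
  assumes "x $ p \<noteq> 0"
  shows "wolfe (fobj a p) c2 x (- grad (fobj a p) x) t \<longleftrightarrow> \<bar>x $ p\<bar> / a < t"
proof -
  define u where "u = \<bar>x $ p\<bar>"
  define N where "N = real CARD('n) - 1"
  define y where "y = x + t *\<^sub>R (- fobj_grad a p x)"
  have y_p: "y $ p = sgn (x $ p) * (u - t * a)"
    unfolding y_def u_def by (rule descent_line_component)
  have "\<bar>x $ p\<bar> / a < t \<longleftrightarrow> u < t * a" using a_pos by (simp add: u_def field_simps)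
  moreover have "wolfe (fobj a p) c2 x (- grad (fobj a p) x) t \<longleftrightarrow> u < t * a"
  proof (cases "u = t * a")
    case True
    then have "\<not> fobj a p differentiable (at y)"
      using y_p a_pos by (intro fobj_not_differentiable) auto
    then show ?thesis using True by (simp add: wolfe_def grad_fobj[OF assms] y_def)
  next
    case False
    then have "y $ p \<noteq> 0" using y_p assms by (simp add: sgn_0_0)
    have "sgn (y $ p) * sgn (x $ p) = sgn (u - t * a)"
      using y_p assms by (simp add: sgn_mult sgn_if)
    then have slope: "fobj_grad a p y \<bullet> - fobj_grad a p x = - (a\<^sup>2 * sgn (u - t * a) + N)"
      by (simp add: fobj_grad_inner N_def)
    have slope0: "fobj_grad a p x \<bullet> - fobj_grad a p x = - (a\<^sup>2 + N)"
      using assms by (simp add: fobj_grad_inner N_def sgn_mult[symmetric] sgn_if)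
    have "wolfe (fobj a p) c2 x (- grad (fobj a p) x) t \<longleftrightarrow>
        a\<^sup>2 * sgn (u - t * a) + N \<le> c2 * (a\<^sup>2 + N)"
      using assms fobj_differentiable[OF \<open>y $ p \<noteq> 0\<close>]
      unfolding wolfe_def grad_fobj[OF assms] y_def[symmetric] grad_fobj[OF \<open>y $ p \<noteq> 0\<close>]
        slope slope0
      by (simp add: algebra_simps)
    also have "\<dots> \<longleftrightarrow> u < t * a"
    proof (cases "u < t * a")
      case True
      have "0 \<le> c2 * (a\<^sup>2 + N)" using c1_pos c1_less_c2 card_le by (simp add: N_def)
      then show ?thesis using True card_le by (simp add: N_def)
    next
      case False
      have "c2 * (a\<^sup>2 + N) < a\<^sup>2 + N"
        using c2_less_1 a_pos card_le by (simp add: N_def add_pos_nonneg)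
      then show ?thesis using False \<open>u \<noteq> t * a\<close> by simp
    qed
    finally show ?thesis .
  qed
  ultimately show ?thesis by simp
qed

lemma armijo_wolfe_bracket_fobj:
  fixes x :: "real^'n"
  assumes "x $ p \<noteq> 0"
  shows "armijo_wolfe_bracket (fobj a p) c1 c2 x (- grad (fobj a p) x)
    (2 * a * \<bar>x $ p\<bar> / armijo_denom) (\<bar>x $ p\<bar> / a)"
  using armijo_fobj_iff[OF assms] wolfe_fobj_iff[OF assms] by unfold_locales

lemma double_wolfe_bound_le_armijo_bound: "2 * (\<bar>x $ p\<bar> / a) \<le> 2 * a * \<bar>x $ p\<bar> / armijo_denom"
proof -
  have "2 * (\<bar>x $ p\<bar> / a) = 2 * a * \<bar>x $ p\<bar> / a\<^sup>2" using a_pos by (simp add: power2_eq_square)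
  also have "\<dots> \<le> 2 * a * \<bar>x $ p\<bar> / armijo_denom"
    using armijo_denom_pos armijo_denom_le a_pos by (intro divide_left_mono) auto
  finally show ?thesis .
qed

lemma descent_step_ratio:
  fixes x :: "real^'n"
  assumes "x $ p \<noteq> 0"
  shows "\<bar>(x + t *\<^sub>R (- grad (fobj a p) x)) $ p\<bar> / a = \<bar>\<bar>x $ p\<bar> / a - t\<bar>"
proof -
  have "\<bar>\<bar>x $ p\<bar> - t * a\<bar> / a = \<bar>(\<bar>x $ p\<bar> - t * a) / a\<bar>" using a_pos by simp
  also have "(\<bar>x $ p\<bar> - t * a) / a = \<bar>x $ p\<bar> / a - t" using a_pos by (simp add: field_simps)
  finally show ?thesis
    using assms unfolding grad_fobj[OF assms] descent_line_component abs_mult by simp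
qed

lemma descent_step_exists:
  fixes x :: "real^'n"
  assumes "\<bar>x $ p\<bar> / a \<notin> \<int>"
  shows "\<exists>t. ls_returns (fobj a p) c1 c2 x (- grad (fobj a p) x) t"
proof -
  have "x $ p \<noteq> 0" using assms by auto
  interpret armijo_wolfe_bracket "fobj a p" c1 c2 x "- grad (fobj a p) x"
      "2 * a * \<bar>x $ p\<bar> / armijo_denom" "\<bar>x $ p\<bar> / a"
    using armijo_wolfe_bracket_fobj[OF \<open>x $ p \<noteq> 0\<close>] .
  have "0 < \<bar>x $ p\<bar> / a" using \<open>x $ p \<noteq> 0\<close> a_pos by simp
  moreover note half = double_wolfe_bound_le_armijo_bound[of x]
  ultimately consider "1 \<le> \<bar>x $ p\<bar> / a" | "0 < \<bar>x $ p\<bar> / a" "\<bar>x $ p\<bar> / a < 1"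
    "\<bar>x $ p\<bar> / a < 2 * a * \<bar>x $ p\<bar> / armijo_denom"
    by linarith
  then show ?thesis
  proof cases
    case 1
    then show ?thesis using ls_returns_doubling[OF 1 half] by blast
  next
    case 2
    then show ?thesis by (rule ls_returns_bisection(1))
  qed
qed

lemma descent_step:
  fixes x :: "real^'n"
  assumes "\<bar>x $ p\<bar> / a \<notin> \<int>" and "ls_returns (fobj a p) c1 c2 x (- grad (fobj a p) x) t"
  shows "\<bar>(x + t *\<^sub>R (- grad (fobj a p) x)) $ p\<bar> / a \<notin> \<int>"
    and "\<bar>x $ p\<bar> / a < 2 ^ r \<Longrightarrow> \<bar>(x + t *\<^sub>R (- grad (fobj a p) x)) $ p\<bar> / a < 2 ^ (r - 1)"
proof -
  define v where "v = \<bar>x $ p\<bar> / a"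
  have "x $ p \<noteq> 0" using assms(1) by auto
  interpret armijo_wolfe_bracket "fobj a p" c1 c2 x "- grad (fobj a p) x"
      "2 * a * \<bar>x $ p\<bar> / armijo_denom" v
    unfolding v_def using armijo_wolfe_bracket_fobj[OF \<open>x $ p \<noteq> 0\<close>] .
  have "0 < v" using \<open>x $ p \<noteq> 0\<close> a_pos by (simp add: v_def)
  have half: "2 * v \<le> 2 * a * \<bar>x $ p\<bar> / armijo_denom"
    unfolding v_def by (rule double_wolfe_bound_le_armijo_bound)
  have new: "\<bar>(x + t *\<^sub>R (- grad (fobj a p) x)) $ p\<bar> / a = \<bar>v - t\<bar>"
    unfolding v_def by (rule descent_step_ratio[OF \<open>x $ p \<noteq> 0\<close>])
  have "\<bar>v - t\<bar> \<notin> \<int> \<and> (v < 2 ^ r \<longrightarrow> \<bar>v - t\<bar> < 2 ^ (r - 1))"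
  proof (cases "v < 1")
    case True
    have "v < 2 * a * \<bar>x $ p\<bar> / armijo_denom" using half \<open>0 < v\<close> by linarith
    then have "v < t" "t \<le> 1"
      using ls_returns_bisection(2)[OF \<open>0 < v\<close> True] assms(2) by auto
    then have "0 < \<bar>v - t\<bar>" "\<bar>v - t\<bar> < 1" using \<open>0 < v\<close> by auto
    moreover have "(1::real) \<le> 2 ^ (r - 1)" by simp
    ultimately have "\<bar>v - t\<bar> < 2 ^ (r - 1)" by linarith
    moreover have "\<bar>v - t\<bar> \<notin> \<int>"
      using \<open>0 < \<bar>v - t\<bar>\<close> \<open>\<bar>v - t\<bar> < 1\<close> by (auto elim!: Ints_cases)
    ultimately show ?thesis by blast
  next
    case False
    define K where "K = (LEAST k. v < (2::real) ^ k)"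
    have "t = 2 ^ K"
      using ls_returns_doubling[of t] False half assms(2) unfolding K_def by auto
    moreover have "v < 2 ^ K"
      unfolding K_def by (rule LeastI_ex) (use real_arch_pow[of 2 v] in auto)
    moreover have "2 ^ K - v \<notin> \<int>"
      using assms(1) Ints_diff[of "2 ^ K" "2 ^ K - v"] by (auto simp: v_def)
    ultimately show ?thesis
      using dyadic_reflection_less[of v r] False assms(1) by (simp add: v_def K_def)
  qed
  then show "\<bar>(x + t *\<^sub>R (- grad (fobj a p) x)) $ p\<bar> / a \<notin> \<int>"
    and "\<bar>x $ p\<bar> / a < 2 ^ r \<Longrightarrow> \<bar>(x + t *\<^sub>R (- grad (fobj a p) x)) $ p\<bar> / a < 2 ^ (r - 1)"
    unfolding new v_def by auto
qed

lemma gd_seq_exists: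
  assumes "\<bar>x0 $ p\<bar> / a \<notin> \<int>"
  shows "\<exists>xs. xs 0 = x0 \<and> gd_seq (fobj a p) c1 c2 xs"
proof -
  define step where "step y = (SOME t. ls_returns (fobj a p) c1 c2 y (- grad (fobj a p) y) t)"
    for y :: "real^'n"
  define xs where "xs k = ((\<lambda>y. y + step y *\<^sub>R (- grad (fobj a p) y)) ^^ k) x0" for k
  have returns: "ls_returns (fobj a p) c1 c2 y (- grad (fobj a p) y) (step y)"
    if "\<bar>y $ p\<bar> / a \<notin> \<int>" for y
    unfolding step_def using descent_step_exists[OF that] by (rule someI_ex)
  have xs_Suc: "xs (Suc k) = xs k + step (xs k) *\<^sub>R (- grad (fobj a p) (xs k))" for k
    by (simp add: xs_def)
  have ratio: "\<bar>xs k $ p\<bar> / a \<notin> \<int>" for k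
  proof (induction k)
    case (Suc k)
    then show ?case unfolding xs_Suc by (rule descent_step(1)[OF _ returns[OF Suc]])
  qed (simp add: xs_def assms)
  then have "xs k $ p \<noteq> 0" for k by (metis Ints_0 abs_zero div_0)
  then have "gd_seq (fobj a p) c1 c2 xs"
    unfolding gd_seq_def using fobj_differentiable returns[OF ratio] xs_Suc by blast
  moreover have "xs 0 = x0" by (simp add: xs_def)
  ultimately show ?thesis by blast
qed

lemma gd_seq_ratio_less:
  assumes "gd_seq (fobj a p) c1 c2 xs" "\<bar>xs 0 $ p\<bar> / a \<notin> \<int>" "\<bar>xs 0 $ p\<bar> / a < 2 ^ m"
  shows "\<bar>xs k $ p\<bar> / a \<notin> \<int> \<and> \<bar>xs k $ p\<bar> / a < 2 ^ (m - k)"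
proof (induction k)
  case (Suc k)
  obtain t where t: "ls_returns (fobj a p) c1 c2 (xs k) (- grad (fobj a p) (xs k)) t"
    and xs_Suc: "xs (Suc k) = xs k + t *\<^sub>R (- grad (fobj a p) (xs k))"
    using assms(1) by (auto simp: gd_seq_def)
  from Suc.IH have IH: "\<bar>xs k $ p\<bar> / a \<notin> \<int>" "\<bar>xs k $ p\<bar> / a < 2 ^ (m - k)" by simp_all
  have "\<bar>xs (Suc k) $ p\<bar> / a \<notin> \<int>"
    unfolding xs_Suc by (rule descent_step(1)[OF IH(1) t])
  moreover have "\<bar>xs (Suc k) $ p\<bar> / a < 2 ^ (m - k - 1)"
    unfolding xs_Suc by (rule descent_step(2)[OF IH(1) t IH(2)])
  ultimately show ?case by simp
qed (simp add: assms(2,3))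

lemma gd_seq_enters_strip:
  assumes "a < \<bar>x0 $ p\<bar>" "\<bar>x0 $ p\<bar> / a \<notin> \<int>" "xs 0 = x0" "gd_seq (fobj a p) c1 c2 xs"
  shows "\<exists>j. int j \<le> \<lceil>log 2 (\<bar>x0 $ p\<bar> / a)\<rceil> \<and> \<bar>xs j $ p\<bar> < a \<and> (\<forall>k\<ge>j. \<bar>xs k $ p\<bar> < a)"
proof -
  define m where "m = nat \<lceil>log 2 (\<bar>x0 $ p\<bar> / a)\<rceil>"
  have "1 < \<bar>x0 $ p\<bar> / a" using assms(1) a_pos by simp
  then have "\<bar>x0 $ p\<bar> / a = 2 powr log 2 (\<bar>x0 $ p\<bar> / a)" by simp
  also have "\<dots> \<le> 2 powr real m"
    using \<open>1 < \<bar>x0 $ p\<bar> / a\<close> by (intro powr_mono) (auto simp: m_def)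
  finally have "\<bar>x0 $ p\<bar> / a \<le> 2 ^ m" by (simp add: powr_realpow)
  moreover have "\<bar>x0 $ p\<bar> / a \<noteq> 2 ^ m" using assms(2) by auto
  ultimately have "\<bar>xs 0 $ p\<bar> / a < 2 ^ m" using assms(3) by simp
  then have "\<bar>xs k $ p\<bar> / a < 2 ^ (m - k)" for k
    using gd_seq_ratio_less[OF assms(4)] assms(2,3) by simp
  then have "\<bar>xs k $ p\<bar> / a < 1" if "m \<le> k" for k
    using that by (metis diff_is_0_eq power_0)
  then have "\<bar>xs k $ p\<bar> < a" if "m \<le> k" for k
    using that a_pos by (simp add: divide_less_eq)
  moreover have "0 < log 2 (\<bar>x0 $ p\<bar> / a)" using \<open>1 < \<bar>x0 $ p\<bar> / a\<close> by simp
  then have "int m \<le> \<lceil>log 2 (\<bar>x0 $ p\<bar> / a)\<rceil>" by (simp add: m_def)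
  ultimately show ?thesis by blast
qed

lemma AE_std_gauss_ratio_not_Ints:
  "AE x in (std_gauss :: (real^'n) measure). \<bar>x $ p\<bar> / a \<notin> \<int>"
proof -
  have "countable (range (\<lambda>z::int. a * of_int z))" by simp
  from AE_std_gauss_component_notin[OF this, of p] show ?thesis
  proof (rule eventually_mono)
    fix x :: "real^'n"
    assume "x $ p \<notin> range (\<lambda>z::int. a * of_int z)"
    then show "\<bar>x $ p\<bar> / a \<notin> \<int>"
      using a_pos by (auto elim!: Ints_cases simp: abs_if field_simps split: if_splits)
  qed
qed

end

theorem theorem3:
  fixes a c1 c2 :: real and p :: "'n::finite"
  assumes "CARD('n) \<ge> 2"
    and "a \<ge> sqrt (real CARD('n) - 1)"
    and "0 < c1" and "c1 < c2" and "c2 < 1"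
    and "c1 + (real CARD('n) - 1) * (c1 - 1) / a\<^sup>2 \<le> 0"
  shows "AE x0 in (std_gauss :: (real^'n) measure).
           \<bar>x0 $ p\<bar> > a \<longrightarrow>
             (\<exists>xs. xs 0 = x0 \<and> gd_seq (fobj a p) c1 c2 xs) \<and>
             (\<forall>xs. xs 0 = x0 \<and> gd_seq (fobj a p) c1 c2 xs \<longrightarrow>
                (\<exists>j. int j \<le> \<lceil>log 2 (\<bar>x0 $ p\<bar> / a)\<rceil> \<and> \<bar>xs j $ p\<bar> < a \<and>
                     (\<forall>k\<ge>j. \<bar>xs k $ p\<bar> < a)))"
proof -
  have "1 \<le> real CARD('n) - 1" using assms(1) by simp
  then have "0 < a" using assms(2) real_sqrt_ge_one[of "real CARD('n) - 1"] by linarith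
  have "real CARD('n) - 1 \<le> a\<^sup>2" using assms(2) by (rule sqrt_le_D)
  moreover have "c1 * a\<^sup>2 + (real CARD('n) - 1) * (c1 - 1) \<le> 0"
    using assms(6) \<open>0 < a\<close> by (simp add: field_simps)
  ultimately interpret abs_linear_descent a c1 c2 p
    using \<open>0 < a\<close> assms(3-5) by unfold_locales
  show ?thesis
    using AE_std_gauss_ratio_not_Ints
  proof eventually_elim
    case (elim x0)
    then show ?case using gd_seq_exists[OF elim] gd_seq_enters_strip[OF _ elim] by blast
  qed
qed

end
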